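(* Let $A$ be a real $n\times n$ matrix, $\alpha>0$, and $F_{A,\alpha}(u)=|u|^\alpha Au$ for $u\in\mathbb R^n$. (i) If there exists $\lambda>0$ with $\|A-\lambda I_n\|_{\mathrm{op}}\le\frac{\lambda}{1+\alpha}$, then $F_{A,\alpha}$ is monotone. (ii) If there exists $\lambda>0$ with $\|A-\lambda I_n\|_{\mathrm{op}}<\frac{\lambda}{1+\alpha}$, then $F_{A,\alpha}$ is $(\alpha+2)$-monotone.
   Context: $|\cdot|$ is the Euclidean norm, $\|A\|_{\mathrm{op}}=\max_{|x|=1}|Ax|$. A map $F:\mathbb R^n\to\mathbb R^n$ is monotone if $(F(u)-F(v))\cdot(u-v)\ge0$ for all $u,v$; for $\beta>0$ it is $\beta$-monotone if there is $C>0$ with $(F(u)-F(v))\cdot(u-v)\ge C|u-v|^\beta$ for all $u,v$. *)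

theory Defs
  imports "HOL-Analysis.Analysis"
begin

definition monotone_map :: "(real^'n \<Rightarrow> real^'n) \<Rightarrow> bool" where
  "monotone_map F \<longleftrightarrow> (\<forall>u v. (F u - F v) \<bullet> (u - v) \<ge> 0)"

definition beta_monotone :: "real \<Rightarrow> (real^'n \<Rightarrow> real^'n) \<Rightarrow> bool" where
  "beta_monotone \<beta> F \<longleftrightarrow> (\<exists>C>0. \<forall>u v. (F u - F v) \<bullet> (u - v) \<ge> C * norm (u - v) powr \<beta>)"

definition op_norm :: "real^'n^'n \<Rightarrow> real" where
  "op_norm A = onorm (\<lambda>x. A *v x)"

definition F_map :: "real^'n^'n \<Rightarrow> real \<Rightarrow> real^'n \<Rightarrow> real^'n" where
  "F_map A \<alpha> u = (norm u powr \<alpha>) *\<^sub>R (A *v u)"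

end

theory Submission
  imports Defs
begin

text \<open>Write \<open>G u = |u|\<^sup>\<alpha> u\<close>, so that \<open>F\<^sub>A\<^sub>,\<^sub>\<alpha> = A \<circ> G\<close>, and \<open>B = A - \<lambda>I\<close>.
  The map \<open>G\<close> satisfies two estimates: it is strongly monotone with modulus
  \<open>(|u|\<^sup>\<alpha> + |v|\<^sup>\<alpha>)/2\<close>, and \<open>|G u - G v| |u - v| \<le> (1 + \<alpha>) (G u - G v)\<cdot>(u - v)\<close>.
  Splitting \<open>A = \<lambda>I + B\<close> and bounding the \<open>B\<close>-part by Cauchy-Schwarz and the second
  estimate gives
  \<open>(F u - F v)\<cdot>(u - v) \<ge> (\<lambda> - (1 + \<alpha>)\<parallel>B\<parallel>) (G u - G v)\<cdot>(u - v)\<close>,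
  which yields (i) directly and (ii) via the first estimate and
  \<open>|u|\<^sup>\<alpha> + |v|\<^sup>\<alpha> \<ge> (|u - v|/2)\<^sup>\<alpha>\<close>.\<close>

definition radial_power :: "real \<Rightarrow> 'a::real_normed_vector \<Rightarrow> 'a" where
  "radial_power \<alpha> u = (norm u powr \<alpha>) *\<^sub>R u"

lemma F_map_eq_radial_power: "F_map A \<alpha> u = A *v radial_power \<alpha> u"
  by (simp add: F_map_def radial_power_def matrix_vector_mult_scaleR)

lemma powr_diff_mult_le:
  fixes a b \<alpha> :: real
  assumes "0 \<le> b" "b \<le> a" "\<alpha> > 0"
  shows "(a powr \<alpha> - b powr \<alpha>) * (a * b) \<le> \<alpha> * (a powr \<alpha> + b powr \<alpha>) * ((a + b) * (a - b))"
proof (cases "b = 0 \<or> a = b")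
  case True
  then show ?thesis using assms by (auto intro!: mult_nonneg_nonneg)
next
  case False
  then have b: "0 < b" "b < a" using assms by auto
  \<comment> \<open>Mean value theorem, then bound \<open>z\<^sup>\<alpha>\<^sup>-\<^sup>1\<close> by \<open>a\<^sup>\<alpha>\<^sup>-\<^sup>1\<close> or \<open>b\<^sup>\<alpha>\<^sup>-\<^sup>1\<close> according to the sign of \<open>\<alpha> - 1\<close>.\<close>
  have "\<exists>z. b < z \<and> z < a \<and> a powr \<alpha> - b powr \<alpha> = (a - b) * (\<alpha> * z powr (\<alpha> - 1))"
    using b by (intro MVT2) (auto intro!: has_real_derivative_powr)
  then obtain z where z: "b < z" "z < a" "a powr \<alpha> - b powr \<alpha> = (a - b) * (\<alpha> * z powr (\<alpha> - 1))"
    by blast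
  have "z powr (\<alpha> - 1) * (a * b) \<le> (a powr \<alpha> + b powr \<alpha>) * (a + b)"
  proof (cases "\<alpha> \<ge> 1")
    case True
    have "z powr (\<alpha> - 1) * (a * b) \<le> a powr (\<alpha> - 1) * a * b"
      using powr_mono2[of "\<alpha> - 1" z a] z True b by (simp add: mult.assoc mult_right_mono)
    also have "\<dots> = a powr \<alpha> * b" using b by (simp add: powr_diff)
    also have "\<dots> \<le> (a powr \<alpha> + b powr \<alpha>) * (a + b)" using b
      by (smt (verit) mult_left_mono mult_right_mono powr_ge_zero distrib_left distrib_right)
    finally show ?thesis .
  next
    case False
    have "z powr (\<alpha> - 1) * (a * b) \<le> b powr (\<alpha> - 1) * b * a"
      using powr_mono2'[of "\<alpha> - 1" b z] z False b
      by (simp add: mult.commute mult.left_commute mult_right_mono)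
    also have "\<dots> = b powr \<alpha> * a" using b by (simp add: powr_diff)
    also have "\<dots> \<le> (a powr \<alpha> + b powr \<alpha>) * (a + b)" using b
      by (smt (verit) mult_left_mono mult_right_mono powr_ge_zero distrib_left distrib_right)
    finally show ?thesis .
  qed
  then have "\<alpha> * (a - b) * (z powr (\<alpha> - 1) * (a * b)) \<le> \<alpha> * (a - b) * ((a powr \<alpha> + b powr \<alpha>) * (a + b))"
    using assms b by (intro mult_left_mono) auto
  moreover have "(a powr \<alpha> - b powr \<alpha>) * (a * b) = \<alpha> * (a - b) * (z powr (\<alpha> - 1) * (a * b))"
    using z(3) by simp
  ultimately show ?thesis by (simp add: algebra_simps)
qed

text \<open>The scalar core of the two estimates on \<open>G\<close>: with \<open>a = |u|, b = |v|, c = u\<cdot>v,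
  p = a\<^sup>\<alpha>, q = b\<^sup>\<alpha>\<close>, the quantities \<open>D, X, N\<close> are \<open>(G u - G v)\<cdot>(u - v)\<close>, \<open>|u - v|\<^sup>2\<close>
  and \<open>|G u - G v|\<^sup>2\<close>. The hypothesis \<open>S\<close> is \<open>powr_diff_mult_le\<close>.\<close>

lemma radial_power_scalar_bounds:
  fixes a b c p q \<alpha> :: real
  assumes "0 \<le> b" "b \<le> a" "\<bar>c\<bar> \<le> a * b" "0 \<le> q" "q \<le> p" "\<alpha> > 0"
    and S: "(p - q) * (a * b) \<le> \<alpha> * (p + q) * ((a + b) * (a - b))"
  defines "D \<equiv> p * a\<^sup>2 + q * b\<^sup>2 - (p + q) * c"
    and "X \<equiv> a\<^sup>2 + b\<^sup>2 - 2 * c"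
    and "N \<equiv> p\<^sup>2 * a\<^sup>2 + q\<^sup>2 * b\<^sup>2 - 2 * p * q * c"
  shows "(p + q) / 2 * X \<le> D" "0 \<le> X" "N * X \<le> ((1 + \<alpha>) * D)\<^sup>2"
proof -
  define y where "y = a * b - c"
  define K where "K = (p - q) * (a\<^sup>2 - b\<^sup>2)"
  have y0: "0 \<le> y" using assms by (simp add: y_def)
  have X2y: "2 * y \<le> X"
    using sum_squares_bound[of a b] by (simp add: X_def y_def algebra_simps power2_eq_square)
  have "b\<^sup>2 \<le> a\<^sup>2" using assms(1,2) by (simp add: power_mono)
  then have K0: "0 \<le> K" unfolding K_def using assms(5) by simp
  have D2: "2 * D = (p + q) * X + K" by (simp add: D_def X_def K_def algebra_simps power2_eq_square)
  show "(p + q) / 2 * X \<le> D" using D2 K0 by simp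
  show "0 \<le> X" using X2y y0 by simp
  have "4 * ((p + q) * X * K) \<le> (2 * D)\<^sup>2"
    using zero_le_power2[of "(p + q) * X - K"] unfolding D2 by (simp add: power2_eq_square algebra_simps)
  then have "(p + q) * X * K \<le> D\<^sup>2" by (simp add: power2_eq_square algebra_simps)
  moreover have "(p + q) * (2 * y) * K \<le> (p + q) * X * K"
    using assms K0 X2y by (intro mult_right_mono mult_left_mono) auto
  ultimately have DK: "2 * y * (p + q) * (p - q) * (a\<^sup>2 - b\<^sup>2) \<le> D\<^sup>2"
    by (simp add: K_def algebra_simps)
  \<comment> \<open>Lagrange-type identity; its correction term is controlled by \<open>S\<close>.\<close>
  have "N * X = D\<^sup>2 + (p - q)\<^sup>2 * y * (a * b + c)"
    by (simp add: N_def X_def D_def y_def algebra_simps power2_eq_square)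
  also have "(p - q)\<^sup>2 * y * (a * b + c) \<le> (p - q)\<^sup>2 * y * (2 * (a * b))"
    using assms y0 by (intro mult_left_mono) auto
  also have "\<dots> = 2 * y * (p - q) * ((p - q) * (a * b))"
    by (simp add: power2_eq_square algebra_simps)
  also have "\<dots> \<le> 2 * y * (p - q) * (\<alpha> * (p + q) * ((a + b) * (a - b)))"
    using S y0 assms by (intro mult_left_mono) auto
  also have "\<dots> = \<alpha> * (2 * y * (p + q) * (p - q) * (a\<^sup>2 - b\<^sup>2))"
    by (simp add: power2_eq_square algebra_simps)
  also have "\<dots> \<le> \<alpha> * D\<^sup>2" using DK assms by (intro mult_left_mono) auto
  finally have "N * X \<le> (1 + \<alpha>) * D\<^sup>2" by (simp add: algebra_simps)
  also have "\<dots> \<le> (1 + \<alpha>)\<^sup>2 * D\<^sup>2"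
    using assms by (intro mult_right_mono) (auto simp: power2_eq_square)
  finally show "N * X \<le> ((1 + \<alpha>) * D)\<^sup>2" by (simp add: power_mult_distrib)
qed

lemma radial_power_bounds_ordered:
  fixes u v :: "'a::real_inner"
  assumes "\<alpha> > 0" "norm v \<le> norm u"
  defines "W \<equiv> radial_power \<alpha> u - radial_power \<alpha> v"
  shows "(norm u powr \<alpha> + norm v powr \<alpha>) / 2 * (norm (u - v))\<^sup>2 \<le> W \<bullet> (u - v)"
    and "norm W * norm (u - v) \<le> (1 + \<alpha>) * (W \<bullet> (u - v))"
proof -
  define a b c p q where "a = norm u" "b = norm v" "c = u \<bullet> v" "p = a powr \<alpha>" "q = b powr \<alpha>"
  note defs = this
  have ab: "0 \<le> b" "b \<le> a" using assms by (simp_all add: defs)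
  have pq: "0 \<le> q" "q \<le> p" using ab assms(1) by (simp_all add: defs(4,5) powr_mono2)
  have cs: "\<bar>c\<bar> \<le> a * b" unfolding defs by (rule Cauchy_Schwarz_ineq2)
  note P = radial_power_scalar_bounds[OF ab cs pq \<open>\<alpha> > 0\<close>
      powr_diff_mult_le[OF ab \<open>\<alpha> > 0\<close>, folded defs(4,5)]]
  have inner_uv: "u \<bullet> u = a\<^sup>2" "v \<bullet> v = b\<^sup>2" "v \<bullet> u = c"
    by (simp_all add: defs(1,2,3) power2_norm_eq_inner inner_commute)
  have D: "W \<bullet> (u - v) = p * a\<^sup>2 + q * b\<^sup>2 - (p + q) * c"
    unfolding W_def radial_power_def defs(1,2,4,5)[symmetric]
    by (simp add: inner_uv defs(3)[symmetric] algebra_simps)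
  have X: "(norm (u - v))\<^sup>2 = a\<^sup>2 + b\<^sup>2 - 2 * c"
    by (simp add: power2_norm_eq_inner inner_uv
        defs(3)[symmetric] algebra_simps)
  have N: "(norm W)\<^sup>2 = p\<^sup>2 * a\<^sup>2 + q\<^sup>2 * b\<^sup>2 - 2 * p * q * c"
    unfolding W_def radial_power_def defs(1,2,4,5)[symmetric] power2_norm_eq_inner
    by (simp add: inner_uv defs(3)[symmetric]
        algebra_simps power2_eq_square)
  show "(norm u powr \<alpha> + norm v powr \<alpha>) / 2 * (norm (u - v))\<^sup>2 \<le> W \<bullet> (u - v)"
    using P(1) D X by (simp add: defs)
  have "0 \<le> W \<bullet> (u - v)"
    using P(1,2) D pq by (smt (verit) mult_nonneg_nonneg divide_nonneg_nonneg)
  have "(norm W * norm (u - v))\<^sup>2 \<le> ((1 + \<alpha>) * (W \<bullet> (u - v)))\<^sup>2"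
    using P(3) D X N by (simp add: power_mult_distrib)
  then show "norm W * norm (u - v) \<le> (1 + \<alpha>) * (W \<bullet> (u - v))"
    by (rule power2_le_imp_le) (use \<open>0 \<le> W \<bullet> (u - v)\<close> \<open>\<alpha> > 0\<close> in simp)
qed

lemma radial_power_bounds:
  fixes u v :: "'a::real_inner"
  assumes "\<alpha> > 0"
  defines "W \<equiv> radial_power \<alpha> u - radial_power \<alpha> v"
  shows radial_power_strongly_monotone:
      "(norm u powr \<alpha> + norm v powr \<alpha>) / 2 * (norm (u - v))\<^sup>2 \<le> W \<bullet> (u - v)"
    and radial_power_cocoercive: "norm W * norm (u - v) \<le> (1 + \<alpha>) * (W \<bullet> (u - v))"
proof -
  have swap: "W \<bullet> (u - v) = (radial_power \<alpha> v - radial_power \<alpha> u) \<bullet> (v - u)"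
    "norm W = norm (radial_power \<alpha> v - radial_power \<alpha> u)" "norm (u - v) = norm (v - u)"
    unfolding W_def by (metis inner_minus_left inner_minus_right minus_diff_eq)
      (simp_all add: norm_minus_commute)
  have "(norm u powr \<alpha> + norm v powr \<alpha>) / 2 * (norm (u - v))\<^sup>2 \<le> W \<bullet> (u - v)
        \<and> norm W * norm (u - v) \<le> (1 + \<alpha>) * (W \<bullet> (u - v))"
  proof (cases "norm v \<le> norm u")
    case True
    from radial_power_bounds_ordered[OF assms(1) this] show ?thesis by (simp add: W_def)
  next
    case False
    then have "norm u \<le> norm v" by simp
    from radial_power_bounds_ordered[OF assms(1) this] show ?thesis
      unfolding swap by (simp add: add.commute)
  qed
  then show "(norm u powr \<alpha> + norm v powr \<alpha>) / 2 * (norm (u - v))\<^sup>2 \<le> W \<bullet> (u - v)"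
    and "norm W * norm (u - v) \<le> (1 + \<alpha>) * (W \<bullet> (u - v))" by simp_all
qed

lemma powr_half_norm_diff_le:
  fixes u v :: "'a::real_normed_vector"
  assumes "\<alpha> \<ge> 0"
  shows "(norm (u - v) / 2) powr \<alpha> \<le> norm u powr \<alpha> + norm v powr \<alpha>"
proof -
  have "norm (u - v) / 2 \<le> max (norm u) (norm v)"
    using norm_triangle_ineq4[of u v] by linarith
  then have "(norm (u - v) / 2) powr \<alpha> \<le> max (norm u) (norm v) powr \<alpha>"
    using assms by (intro powr_mono2) auto
  then show ?thesis by (smt (verit) powr_ge_zero)
qed

lemma radial_power_uniformly_monotone:
  fixes u v :: "'a::real_inner"
  assumes "\<alpha> > 0"
  shows "(1 / 2) powr \<alpha> / 2 * norm (u - v) powr (\<alpha> + 2)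
           \<le> (radial_power \<alpha> u - radial_power \<alpha> v) \<bullet> (u - v)"
proof -
  define d where "d = norm (u - v)"
  have "d powr (\<alpha> + 2) = ((d / 2) * 2) powr \<alpha> * d powr 2" by (simp add: powr_add)
  also have "d powr 2 = d\<^sup>2"
    by (cases "d = 0") (simp_all add: d_def powr_realpow)
  also have "((d / 2) * 2) powr \<alpha> = (d / 2) powr \<alpha> * 2 powr \<alpha>"
    by (rule powr_mult)
  finally have "(1 / 2) powr \<alpha> / 2 * d powr (\<alpha> + 2) = (d / 2) powr \<alpha> / 2 * d\<^sup>2"
    by (simp add: powr_divide field_simps)
  also have "\<dots> \<le> (norm u powr \<alpha> + norm v powr \<alpha>) / 2 * d\<^sup>2"
    using powr_half_norm_diff_le[of \<alpha> u v] assms by (intro mult_right_mono) (auto simp: d_def)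
  also have "\<dots> \<le> (radial_power \<alpha> u - radial_power \<alpha> v) \<bullet> (u - v)"
    using radial_power_strongly_monotone[OF assms] by (simp add: d_def)
  finally show ?thesis by (simp add: d_def)
qed

lemma inner_matrix_shift_ge:
  fixes A :: "real^'n^'n" and w d :: "real^'n"
  assumes "norm w * norm d \<le> c * (w \<bullet> d)"
  shows "(lam - op_norm (A - lam *\<^sub>R mat 1) * c) * (w \<bullet> d) \<le> (A *v w) \<bullet> d"
proof -
  define B where "B = A - lam *\<^sub>R mat 1"
  have "A = B + lam *\<^sub>R mat 1" by (simp add: B_def)
  then have "A *v w = B *v w + lam *\<^sub>R w"
    by (simp add: matrix_vector_mult_add_rdistrib scaleR_matrix_vector_assoc[symmetric])
  moreover have "- ((B *v w) \<bullet> d) \<le> op_norm B * c * (w \<bullet> d)"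
  proof -
    have "- ((B *v w) \<bullet> d) \<le> norm (B *v w) * norm d"
      using Cauchy_Schwarz_ineq2[of "B *v w" d] by linarith
    also have "\<dots> \<le> op_norm B * norm w * norm d"
      unfolding op_norm_def by (intro mult_right_mono onorm) simp_all
    also have "\<dots> \<le> op_norm B * (c * (w \<bullet> d))"
      using assms onorm_pos_le[of "\<lambda>x. B *v x"] unfolding op_norm_def
      by (simp add: mult.assoc mult_left_mono)
    finally show ?thesis by simp
  qed
  ultimately show ?thesis unfolding B_def[symmetric] by (simp add: algebra_simps)
qed

lemma F_map_monotonicity_gap:
  fixes A :: "real^'n^'n"
  assumes "\<alpha> > 0"
  shows "(lam - op_norm (A - lam *\<^sub>R mat 1) * (1 + \<alpha>))
           * ((radial_power \<alpha> u - radial_power \<alpha> v) \<bullet> (u - v))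
         \<le> (F_map A \<alpha> u - F_map A \<alpha> v) \<bullet> (u - v)"
proof -
  have "F_map A \<alpha> u - F_map A \<alpha> v = A *v (radial_power \<alpha> u - radial_power \<alpha> v)"
    by (simp add: F_map_eq_radial_power matrix_vector_mult_diff_distrib)
  then show ?thesis
    using inner_matrix_shift_ge[OF radial_power_cocoercive[OF assms, of u v]] by metis
qed

theorem mainTheorem11:
  fixes A :: "real^'n^'n" and \<alpha> :: real
  assumes "\<alpha> > 0"
  shows "((\<exists>lam>0. op_norm (A - lam *\<^sub>R mat 1) \<le> lam / (1 + \<alpha>)) \<longrightarrow> monotone_map (F_map A \<alpha>))
       \<and> ((\<exists>lam>0. op_norm (A - lam *\<^sub>R mat 1) < lam / (1 + \<alpha>)) \<longrightarrow> beta_monotone (\<alpha> + 2) (F_map A \<alpha>))"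
proof (intro conjI impI)
  assume "\<exists>lam>0. op_norm (A - lam *\<^sub>R mat 1) \<le> lam / (1 + \<alpha>)"
  then obtain lam where "op_norm (A - lam *\<^sub>R mat 1) \<le> lam / (1 + \<alpha>)" by blast
  then have e: "0 \<le> lam - op_norm (A - lam *\<^sub>R mat 1) * (1 + \<alpha>)"
    using assms by (simp add: field_simps)
  show "monotone_map (F_map A \<alpha>)"
    unfolding monotone_map_def
  proof (intro allI)
    fix u v :: "real^'n"
    have "0 \<le> (1 / 2) powr \<alpha> / 2 * norm (u - v) powr (\<alpha> + 2)" by simp
    also have "\<dots> \<le> (radial_power \<alpha> u - radial_power \<alpha> v) \<bullet> (u - v)"
      by (rule radial_power_uniformly_monotone[OF assms])
    finally have "0 \<le> (lam - op_norm (A - lam *\<^sub>R mat 1) * (1 + \<alpha>))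
                    * ((radial_power \<alpha> u - radial_power \<alpha> v) \<bullet> (u - v))"
      using e by simp
    also have "\<dots> \<le> (F_map A \<alpha> u - F_map A \<alpha> v) \<bullet> (u - v)"
      by (rule F_map_monotonicity_gap[OF assms])
    finally show "0 \<le> (F_map A \<alpha> u - F_map A \<alpha> v) \<bullet> (u - v)" .
  qed
next
  assume "\<exists>lam>0. op_norm (A - lam *\<^sub>R mat 1) < lam / (1 + \<alpha>)"
  then obtain lam where "op_norm (A - lam *\<^sub>R mat 1) < lam / (1 + \<alpha>)" by blast
  then have e: "0 < lam - op_norm (A - lam *\<^sub>R mat 1) * (1 + \<alpha>)" (is "0 < ?e")
    using assms by (simp add: field_simps)
  show "beta_monotone (\<alpha> + 2) (F_map A \<alpha>)"
    unfolding beta_monotone_def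
  proof (intro exI[of _ "?e * ((1 / 2) powr \<alpha> / 2)"] conjI allI)
    fix u v :: "real^'n"
    have "?e * ((1 / 2) powr \<alpha> / 2 * norm (u - v) powr (\<alpha> + 2))
            \<le> ?e * ((radial_power \<alpha> u - radial_power \<alpha> v) \<bullet> (u - v))"
      using e by (intro mult_left_mono radial_power_uniformly_monotone[OF assms]) simp
    also have "\<dots> \<le> (F_map A \<alpha> u - F_map A \<alpha> v) \<bullet> (u - v)"
      by (rule F_map_monotonicity_gap[OF assms])
    finally show "?e * ((1 / 2) powr \<alpha> / 2) * norm (u - v) powr (\<alpha> + 2)
                    \<le> (F_map A \<alpha> u - F_map A \<alpha> v) \<bullet> (u - v)"
      by (simp only: mult.assoc)
  qed (use e in simp)
qed

end
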